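(* Let $d\ge2$ and let $W=(W(x))_{x\in\mathbf{R}^d}$ be a centered Gaussian field which is almost surely continuous with $W(0)=0$ almost surely, and let $K(x,y)=E[W(x)W(y)]$. Let $S^{d-1}$ be the unit sphere with surface measure $dy$. If there exists $\varepsilon>0$ such that \[\inf_{x\in S^{d-1}}\int_{S^{d-1}}K(x,y)\,dy\ge\varepsilon,\] then for every $a\in\mathbf{R}$, \[P\Big(\inf_{x\in S^{d-1}}W(x)\ge a\Big)>0.\] *)

theory Defs
  imports "HOL-Probability.Probability"
begin

definition centered_gaussian :: "real \<Rightarrow> real measure" where
  "centered_gaussian \<sigma> =
     (if \<sigma> = 0 then return borel 0 else density lborel (normal_density 0 \<sigma>))"

definition centered_gaussian_field :: "'w measure \<Rightarrow> ('t \<Rightarrow> 'w \<Rightarrow> real) \<Rightarrow> bool" where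
  "centered_gaussian_field M W \<longleftrightarrow>
     prob_space M \<and>
     (\<forall>x. W x \<in> borel_measurable M) \<and>
     (\<forall>(I::nat set) (p::nat \<Rightarrow> 't) (c::nat \<Rightarrow> real). finite I \<longrightarrow>
        (\<exists>\<sigma>\<ge>0. distr M borel (\<lambda>\<omega>. \<Sum>i\<in>I. c i * W (p i) \<omega>) = centered_gaussian \<sigma>))"

text \<open>Surface measure on the unit sphere of R^n: sigma(A) = n * Lebesgue measure of the cone
  {t y | 0 < t <= 1, y in A}, realised as n times the push-forward of Lebesgue measure on
  the punctured unit ball under x |-> x / |x|.\<close>
definition sphere_surface_measure :: "(real^'n) measure" where
  "sphere_surface_measure =
     scale_measure (of_nat CARD('n))
       (distr (restrict_space lborel (cball 0 1 - {0})) (restrict_space borel (sphere 0 1))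
          (\<lambda>x. x /\<^sub>R norm x))"

end

theory Submission
  imports Defs
begin

text \<open>
  Discretising the spherical integral gives a finite combination \<open>Y = (\<Sum>j. w\<^sub>j W(y\<^sub>j))\<close>
  with \<open>E[W(x) Y] \<ge> \<epsilon>/2\<close> on the sphere. Write \<open>W(x) = c(x) Y + R(x)\<close> with \<open>R(x)\<close>
  orthogonal to \<open>Y\<close>, hence independent of \<open>Y\<close> since the field is Gaussian. The residual field
  has continuous paths, so it is bounded by some \<open>b\<close> on the sphere with positive probability;
  intersecting with the independent event \<open>Y \<ge> t\<close> for large \<open>t\<close> gives
  \<open>W(x) \<ge> c(x) t - b \<ge> a\<close> on an event of positive probability. Independence of orthogonal
  Gaussian variables comes from the fact that joint characteristic functions determine joint laws,
  which is reduced to Levy's univariate uniqueness theorem by induction on the number of variables.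
\<close>

lemma normalized_weighted_distribution:
  fixes X w :: "'a \<Rightarrow> real"
  assumes "prob_space M" and [measurable]: "X \<in> borel_measurable M" "w \<in> borel_measurable M"
    and w: "w \<in> space M \<rightarrow> {0..K}"
    and c: "(\<integral>\<omega>. w \<omega> \<partial>M) = c" "c > 0"
  shows "real_distribution (distr (density M (\<lambda>\<omega>. w \<omega> / c)) borel X)" (is "real_distribution ?D")
    and "char (distr (density M (\<lambda>\<omega>. w \<omega> / c)) borel X) t
      = (\<integral>\<omega>. w \<omega> *\<^sub>R iexp (t * X \<omega>) \<partial>M) / c"
    and "B \<in> sets borel \<Longrightarrow> measure (distr (density M (\<lambda>\<omega>. w \<omega> / c)) borel X) B
      = (\<integral>\<omega>. w \<omega> * indicator B (X \<omega>) \<partial>M) / c"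
proof -
  interpret prob_space M by fact
  have w_nonneg: "AE \<omega> in M. 0 \<le> w \<omega> / c" using w c by (intro AE_I2) (auto simp: Pi_iff)
  have "integrable M w"
    using w by (intro integrable_const_bound[where B=K]) (auto simp: Pi_iff)
  have "emeasure (density M (\<lambda>\<omega>. w \<omega> / c)) (space M) = (\<integral>\<^sup>+\<omega>. ennreal (w \<omega> / c) \<partial>M)"
    by (simp add: emeasure_density)
  also have "\<dots> = ennreal (\<integral>\<omega>. w \<omega> / c \<partial>M)"
    using \<open>integrable M w\<close> w_nonneg by (intro nn_integral_eq_integral) auto
  also have "\<dots> = 1" using c by simp
  finally have "prob_space (density M (\<lambda>\<omega>. w \<omega> / c))"
    by (intro prob_spaceI) simp
  then show D: "real_distribution ?D"
    unfolding real_distribution_def real_distribution_axioms_def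
    by (auto intro!: prob_space.prob_space_distr)
  show "char ?D t = (\<integral>\<omega>. w \<omega> *\<^sub>R iexp (t * X \<omega>) \<partial>M) / c"
  proof -
    have "char ?D t = (\<integral>\<omega>. (w \<omega> / c) *\<^sub>R iexp (t * X \<omega>) \<partial>M)"
      unfolding char_def using w_nonneg
      by (simp add: integral_distr integral_density)
    also have "\<dots> = (1 / c) *\<^sub>R (\<integral>\<omega>. w \<omega> *\<^sub>R iexp (t * X \<omega>) \<partial>M)"
      by (subst integral_scaleR_right[symmetric]) simp
    also have "\<dots> = (\<integral>\<omega>. w \<omega> *\<^sub>R iexp (t * X \<omega>) \<partial>M) / c"
      by (simp add: scaleR_conv_of_real field_simps)
    finally show ?thesis .
  qed
  show "measure ?D B = (\<integral>\<omega>. w \<omega> * indicator B (X \<omega>) \<partial>M) / c"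
    if [measurable]: "B \<in> sets borel"
  proof -
    interpret D: real_distribution ?D by (rule D)
    have "measure ?D B = (\<integral>x. indicator B x \<partial>?D)"
      by (simp add: D.emeasure_finite)
    also have "\<dots> = (\<integral>\<omega>. indicator B (X \<omega>) \<partial>density M (\<lambda>\<omega>. w \<omega> / c))"
      by (rule integral_distr) auto
    also have "\<dots> = (\<integral>\<omega>. w \<omega> * indicator B (X \<omega>) \<partial>M) / c"
      using w_nonneg by (simp add: integral_density)
    finally show ?thesis .
  qed
qed

lemma integral_weight_indicator_le:
  fixes X w :: "'a \<Rightarrow> real"
  assumes "prob_space M" and [measurable]: "X \<in> borel_measurable M" "w \<in> borel_measurable M" "B \<in> sets borel"
    and w: "w \<in> space M \<rightarrow> {0..K}"
  shows "0 \<le> (\<integral>\<omega>. w \<omega> * indicator B (X \<omega>) \<partial>M)"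
    and "(\<integral>\<omega>. w \<omega> * indicator B (X \<omega>) \<partial>M) \<le> (\<integral>\<omega>. w \<omega> \<partial>M)"
proof -
  interpret prob_space M by fact
  have K: "0 \<le> K" using w not_empty by (fastforce simp: Pi_iff)
  show "0 \<le> (\<integral>\<omega>. w \<omega> * indicator B (X \<omega>) \<partial>M)"
    using w by (intro integral_nonneg_AE AE_I2) (auto simp: Pi_iff)
  show "(\<integral>\<omega>. w \<omega> * indicator B (X \<omega>) \<partial>M) \<le> (\<integral>\<omega>. w \<omega> \<partial>M)"
    using w K by (intro integral_mono integrable_const_bound[where B=K])
      (auto simp: indicator_def Pi_iff)
qed

lemma weighted_Levy_uniqueness:
  fixes X w :: "'a \<Rightarrow> real" and X' w' :: "'b \<Rightarrow> real"
  assumes M: "prob_space M" and N: "prob_space N"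
    and X[measurable]: "X \<in> borel_measurable M" and wm[measurable]: "w \<in> borel_measurable M"
    and X'[measurable]: "X' \<in> borel_measurable N" and wm'[measurable]: "w' \<in> borel_measurable N"
    and w: "w \<in> space M \<rightarrow> {0..K}"
    and w': "w' \<in> space N \<rightarrow> {0..K}"
    and char_eq: "\<And>t. (\<integral>\<omega>. w \<omega> *\<^sub>R iexp (t * X \<omega>) \<partial>M) = (\<integral>\<omega>. w' \<omega> *\<^sub>R iexp (t * X' \<omega>) \<partial>N)"
    and B[measurable]: "B \<in> sets borel"
  shows "(\<integral>\<omega>. w \<omega> * indicator B (X \<omega>) \<partial>M) = (\<integral>\<omega>. w' \<omega> * indicator B (X' \<omega>) \<partial>N)"
proof -
  have mass_eq: "(\<integral>\<omega>. w \<omega> \<partial>M) = (\<integral>\<omega>. w' \<omega> \<partial>N)"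
    using char_eq[of 0] by (simp add: scaleR_conv_of_real)
  have "0 \<le> (\<integral>\<omega>. w \<omega> \<partial>M)" using w by (intro integral_nonneg_AE AE_I2) (auto simp: Pi_iff)
  then consider "(\<integral>\<omega>. w \<omega> \<partial>M) = 0" | "(\<integral>\<omega>. w \<omega> \<partial>M) > 0" by linarith
  then show ?thesis
  proof cases
    case 1
    have "(\<integral>\<omega>. w \<omega> * indicator B (X \<omega>) \<partial>M) = 0"
      using integral_weight_indicator_le[OF M X wm B w] 1 by (simp add: order_antisym)
    moreover have "(\<integral>\<omega>. w' \<omega> * indicator B (X' \<omega>) \<partial>N) = 0"
      using integral_weight_indicator_le[OF N X' wm' B w'] 1 mass_eq by (simp add: order_antisym)
    ultimately show ?thesis by simp
  next
    case 2
    let ?c = "\<integral>\<omega>. w \<omega> \<partial>M"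
    note D = normalized_weighted_distribution[OF M X wm w refl 2]
    note D' = normalized_weighted_distribution[OF N X' wm' w' mass_eq[symmetric] 2]
    have "distr (density M (\<lambda>\<omega>. w \<omega> / ?c)) borel X = distr (density N (\<lambda>\<omega>. w' \<omega> / ?c)) borel X'"
      using D(1) D'(1) by (rule Levy_uniqueness, intro ext) (simp only: D(2) D'(2) char_eq)
    then show ?thesis
      using D(3)[OF B] D'(3)[OF B] 2 by simp
  qed
qed

lemma iexp_eq_cis: "iexp x = cis x"
  by (simp add: cis_conv_exp)

lemma integral_trig_weight_iexp:
  fixes g p Y :: "'a \<Rightarrow> real"
  assumes "prob_space M"
    and [measurable]: "g \<in> borel_measurable M" "p \<in> borel_measurable M" "Y \<in> borel_measurable M"
    and g: "g \<in> space M \<rightarrow> {-1..1}"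
  shows "(\<integral>\<omega>. (g \<omega> * (1 + a * cos (p \<omega>) + b * sin (p \<omega>))) *\<^sub>R iexp (t * Y \<omega>) \<partial>M) =
     (\<integral>\<omega>. g \<omega> *\<^sub>R iexp (t * Y \<omega>) \<partial>M)
     + ((a - \<i> * b) / 2) * (\<integral>\<omega>. g \<omega> *\<^sub>R iexp (t * Y \<omega> + p \<omega>) \<partial>M)
     + ((a + \<i> * b) / 2) * (\<integral>\<omega>. g \<omega> *\<^sub>R iexp (t * Y \<omega> - p \<omega>) \<partial>M)"
proof -
  interpret prob_space M by fact
  have int: "integrable M (\<lambda>\<omega>. g \<omega> *\<^sub>R iexp (q \<omega>))" if [measurable]: "q \<in> borel_measurable M" for q
    using g by (intro integrable_const_bound[where B=1] AE_I2) (auto simp: norm_mult Pi_iff abs_le_iff)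
  have pointwise: "(g \<omega> * (1 + a * cos (p \<omega>) + b * sin (p \<omega>))) *\<^sub>R iexp (t * Y \<omega>) =
      g \<omega> *\<^sub>R iexp (t * Y \<omega>) + ((a - \<i> * b) / 2) * (g \<omega> *\<^sub>R iexp (t * Y \<omega> + p \<omega>))
      + ((a + \<i> * b) / 2) * (g \<omega> *\<^sub>R iexp (t * Y \<omega> - p \<omega>))" for \<omega>
    unfolding iexp_eq_cis by (simp add: complex_eq_iff cos_add sin_add cos_diff sin_diff field_simps)
  have "integrable M (\<lambda>\<omega>. g \<omega> *\<^sub>R iexp (t * Y \<omega>))"
    "integrable M (\<lambda>\<omega>. g \<omega> *\<^sub>R iexp (t * Y \<omega> + p \<omega>))"
    "integrable M (\<lambda>\<omega>. g \<omega> *\<^sub>R iexp (t * Y \<omega> - p \<omega>))"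
    by (intro int; measurable)+
  then show ?thesis
    unfolding pointwise
    by (simp only: Bochner_Integration.integral_add Bochner_Integration.integrable_add
        Bochner_Integration.integrable_mult_right integral_mult_right_zero)
qed

lemma integral_weight_indicator_iexp:
  fixes g X \<phi> :: "'a \<Rightarrow> real"
  assumes "prob_space M"
    and [measurable]: "g \<in> borel_measurable M" "X \<in> borel_measurable M" "\<phi> \<in> borel_measurable M"
      "B \<in> sets borel"
    and g: "g \<in> space M \<rightarrow> {0..1}"
  shows "(\<integral>\<omega>. (g \<omega> * indicator B (X \<omega>)) *\<^sub>R iexp (\<phi> \<omega>) \<partial>M) =
    of_real ((\<integral>\<omega>. g \<omega> * (1 + cos (\<phi> \<omega>)) * indicator B (X \<omega>) \<partial>M)
      - (\<integral>\<omega>. g \<omega> * indicator B (X \<omega>) \<partial>M))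
    + \<i> * of_real ((\<integral>\<omega>. g \<omega> * (1 + sin (\<phi> \<omega>)) * indicator B (X \<omega>) \<partial>M)
      - (\<integral>\<omega>. g \<omega> * indicator B (X \<omega>) \<partial>M))"
proof -
  interpret prob_space M by fact
  have int: "integrable M (\<lambda>\<omega>. g \<omega> * c \<omega> * indicator B (X \<omega>))"
    if [measurable]: "c \<in> borel_measurable M" and c: "\<And>\<omega>. \<bar>c \<omega>\<bar> \<le> 2" for c
  proof (intro integrable_const_bound[where B=2] AE_I2)
    fix \<omega> assume "\<omega> \<in> space M"
    then have "\<bar>g \<omega>\<bar> * \<bar>c \<omega>\<bar> \<le> 1 * 2"
      using g c[of \<omega>] by (intro mult_mono) (auto simp: Pi_iff)
    then show "norm (g \<omega> * c \<omega> * indicator B (X \<omega>)) \<le> 2"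
      by (auto simp: indicator_def abs_mult)
  qed measurable
  have "integrable M (\<lambda>\<omega>. g \<omega> * (1 + cos (\<phi> \<omega>)) * indicator B (X \<omega>))"
    "integrable M (\<lambda>\<omega>. g \<omega> * (1 + sin (\<phi> \<omega>)) * indicator B (X \<omega>))"
    "integrable M (\<lambda>\<omega>. g \<omega> * indicator B (X \<omega>))"
    using int[of "\<lambda>\<omega>. 1 + cos (\<phi> \<omega>)"] int[of "\<lambda>\<omega>. 1 + sin (\<phi> \<omega>)"] int[of "\<lambda>_. 1"]
    by (simp_all add: abs_le_iff) (smt (verit) cos_ge_minus_one sin_ge_minus_one)+
  moreover have "(g \<omega> * indicator B (X \<omega>)) *\<^sub>R iexp (\<phi> \<omega>) =
      of_real (g \<omega> * (1 + cos (\<phi> \<omega>)) * indicator B (X \<omega>) - g \<omega> * indicator B (X \<omega>))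
      + \<i> * of_real (g \<omega> * (1 + sin (\<phi> \<omega>)) * indicator B (X \<omega>) - g \<omega> * indicator B (X \<omega>))"
    for \<omega>
    unfolding iexp_eq_cis by (simp add: complex_eq_iff algebra_simps)
  ultimately show ?thesis
    by (simp only: Bochner_Integration.integral_add Bochner_Integration.integral_diff
        Bochner_Integration.integrable_add Bochner_Integration.integrable_diff integrable_of_real
        Bochner_Integration.integrable_mult_right integral_mult_right_zero integral_complex_of_real)
qed

text \<open>The complex weight \<open>g exp (i \<phi>)\<close> is a combination of the nonnegative weights \<open>g\<close>,
  \<open>g (1 + cos \<phi>)\<close> and \<open>g (1 + sin \<phi>)\<close>, to each of which the univariate theorem applies.\<close>

lemma mixed_char_eq_imp_weighted_iexp_eq:
  fixes X g \<phi> :: "'a \<Rightarrow> real" and X' g' \<phi>' :: "'b \<Rightarrow> real"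
  assumes M: "prob_space M" and N: "prob_space N"
    and X[measurable]: "X \<in> borel_measurable M" and gm[measurable]: "g \<in> borel_measurable M"
    and \<phi>[measurable]: "\<phi> \<in> borel_measurable M"
    and X'[measurable]: "X' \<in> borel_measurable N" and gm'[measurable]: "g' \<in> borel_measurable N"
    and \<phi>'[measurable]: "\<phi>' \<in> borel_measurable N"
    and g: "g \<in> space M \<rightarrow> {0..1}" and g': "g' \<in> space N \<rightarrow> {0..1}"
    and char_eq: "\<And>t s. (\<integral>\<omega>. g \<omega> *\<^sub>R iexp (t * X \<omega> + s * \<phi> \<omega>) \<partial>M)
      = (\<integral>\<omega>. g' \<omega> *\<^sub>R iexp (t * X' \<omega> + s * \<phi>' \<omega>) \<partial>N)"
    and B[measurable]: "B \<in> sets borel"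
  shows "(\<integral>\<omega>. (g \<omega> * indicator B (X \<omega>)) *\<^sub>R iexp (\<phi> \<omega>) \<partial>M)
    = (\<integral>\<omega>. (g' \<omega> * indicator B (X' \<omega>)) *\<^sub>R iexp (\<phi>' \<omega>) \<partial>N)"
proof -
  have weight: "(\<lambda>\<omega>. h \<omega> * (1 + a * cos (\<psi> \<omega>) + b * sin (\<psi> \<omega>))) \<in> space P \<rightarrow> {0..2}"
    if "h \<in> space P \<rightarrow> {0..1}" "\<bar>a\<bar> + \<bar>b\<bar> \<le> 1" for h \<psi> :: "'c \<Rightarrow> real" and P a b
  proof
    fix \<omega> assume "\<omega> \<in> space P"
    have "\<bar>a * cos (\<psi> \<omega>) + b * sin (\<psi> \<omega>)\<bar> \<le> \<bar>a\<bar> * 1 + \<bar>b\<bar> * 1"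
      by (intro order_trans[OF abs_triangle_ineq] add_mono) (auto simp: abs_mult intro!: mult_left_le)
    then show "h \<omega> * (1 + a * cos (\<psi> \<omega>) + b * sin (\<psi> \<omega>)) \<in> {0..2}"
      using that \<open>\<omega> \<in> space P\<close> mult_mono[of "h \<omega>" 1 "1 + a * cos (\<psi> \<omega>) + b * sin (\<psi> \<omega>)" 2]
      by (auto simp: Pi_iff abs_le_iff)
  qed
  have g_abs: "g \<in> space M \<rightarrow> {-1..1}" "g' \<in> space N \<rightarrow> {-1..1}"
    using g g' by (auto simp: Pi_iff intro: order_trans[of _ 0])
  have law_eq: "(\<integral>\<omega>. g \<omega> * (1 + a * cos (\<phi> \<omega>) + b * sin (\<phi> \<omega>)) * indicator B (X \<omega>) \<partial>M)
      = (\<integral>\<omega>. g' \<omega> * (1 + a * cos (\<phi>' \<omega>) + b * sin (\<phi>' \<omega>)) * indicator B (X' \<omega>) \<partial>N)"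
    if "\<bar>a\<bar> + \<bar>b\<bar> \<le> 1" for a b
    using M N _ _ _ _ weight[OF g that] weight[OF g' that] _
  proof (rule weighted_Levy_uniqueness)
    fix t
    show "(\<integral>\<omega>. (g \<omega> * (1 + a * cos (\<phi> \<omega>) + b * sin (\<phi> \<omega>))) *\<^sub>R iexp (t * X \<omega>) \<partial>M)
      = (\<integral>\<omega>. (g' \<omega> * (1 + a * cos (\<phi>' \<omega>) + b * sin (\<phi>' \<omega>))) *\<^sub>R iexp (t * X' \<omega>) \<partial>N)"
      unfolding integral_trig_weight_iexp[OF M gm \<phi> X g_abs(1)]
        integral_trig_weight_iexp[OF N gm' \<phi>' X' g_abs(2)]
      using char_eq[of t 0] char_eq[of t 1] char_eq[of t "-1"] by simp
  qed measurable
  show ?thesis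
    unfolding integral_weight_indicator_iexp[OF M gm X \<phi> B g]
      integral_weight_indicator_iexp[OF N gm' X' \<phi>' B g']
    using law_eq[of 0 0] law_eq[of 1 0] law_eq[of 0 1] by simp
qed

lemma joint_char_eq_imp_indicator_iexp_eq:
  fixes X :: "nat \<Rightarrow> 'a \<Rightarrow> real" and X' :: "nat \<Rightarrow> 'b \<Rightarrow> real"
  assumes M: "prob_space M" and N: "prob_space N"
    and X[measurable]: "\<And>j. X j \<in> borel_measurable M" and X'[measurable]: "\<And>j. X' j \<in> borel_measurable N"
    and char_eq: "\<And>\<theta>. (\<integral>\<omega>. iexp (\<Sum>j<n. \<theta> j * X j \<omega>) \<partial>M) = (\<integral>\<omega>. iexp (\<Sum>j<n. \<theta> j * X' j \<omega>) \<partial>N)"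
  shows "m \<le> n \<Longrightarrow> (\<And>j. j < m \<Longrightarrow> B j \<in> sets borel) \<Longrightarrow>
     (\<integral>\<omega>. (\<Prod>j<m. indicator (B j) (X j \<omega>)) *\<^sub>R iexp (\<Sum>j\<in>{m..<n}. \<theta> j * X j \<omega>) \<partial>M) =
     (\<integral>\<omega>. (\<Prod>j<m. indicator (B j) (X' j \<omega>)) *\<^sub>R iexp (\<Sum>j\<in>{m..<n}. \<theta> j * X' j \<omega>) \<partial>N)"
proof (induction m arbitrary: \<theta>)
  case 0
  then show ?case using char_eq[of \<theta>] by (simp add: atLeast0LessThan)
next
  case (Suc m)
  have [measurable]: "B j \<in> sets borel" if "j \<le> m" for j using Suc.prems that by simp
  let ?g = "\<lambda>X \<omega>. \<Prod>j<m. indicator (B j) (X j \<omega>) :: real"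
  let ?\<phi> = "\<lambda>X \<omega>. \<Sum>j\<in>{Suc m..<n}. \<theta> j * X j \<omega>"
  have "(\<integral>\<omega>. (?g X \<omega> * indicator (B m) (X m \<omega>)) *\<^sub>R iexp (?\<phi> X \<omega>) \<partial>M)
      = (\<integral>\<omega>. (?g X' \<omega> * indicator (B m) (X' m \<omega>)) *\<^sub>R iexp (?\<phi> X' \<omega>) \<partial>N)"
  proof (rule mixed_char_eq_imp_weighted_iexp_eq[OF M N])
    show "?g X \<in> space M \<rightarrow> {0..1}" "?g X' \<in> space N \<rightarrow> {0..1}"
      by (auto intro!: prod_nonneg prod_le_1)
    fix t s
    have "{m..<n} = insert m {Suc m..<n}" using Suc.prems by auto
    then have split_sum:
      "(\<Sum>j\<in>{m..<n}. (if j = m then t else s * \<theta> j) * Y j \<omega>) = t * Y m \<omega> + s * ?\<phi> Y \<omega>"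
      for Y :: "nat \<Rightarrow> 'c \<Rightarrow> real" and \<omega>
      by (simp add: sum_distrib_left mult.assoc)
    then show "(\<integral>\<omega>. ?g X \<omega> *\<^sub>R iexp (t * X m \<omega> + s * ?\<phi> X \<omega>) \<partial>M)
        = (\<integral>\<omega>. ?g X' \<omega> *\<^sub>R iexp (t * X' m \<omega> + s * ?\<phi> X' \<omega>) \<partial>N)"
      using Suc.IH[of "\<lambda>j. if j = m then t else s * \<theta> j"] Suc.prems unfolding split_sum by simp
  qed measurable
  then show ?case by (simp add: prod.lessThan_Suc)
qed

lemma joint_char_eq_imp_measure_eq:
  fixes X :: "nat \<Rightarrow> 'a \<Rightarrow> real" and X' :: "nat \<Rightarrow> 'b \<Rightarrow> real"
  assumes M: "prob_space M" and N: "prob_space N"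
    and X[measurable]: "\<And>j. X j \<in> borel_measurable M" and X'[measurable]: "\<And>j. X' j \<in> borel_measurable N"
    and char_eq: "\<And>\<theta>. (\<integral>\<omega>. iexp (\<Sum>j<n. \<theta> j * X j \<omega>) \<partial>M) = (\<integral>\<omega>. iexp (\<Sum>j<n. \<theta> j * X' j \<omega>) \<partial>N)"
    and B: "\<And>j. j < n \<Longrightarrow> B j \<in> sets borel"
  shows "measure M {\<omega>\<in>space M. \<forall>j<n. X j \<omega> \<in> B j} = measure N {\<omega>\<in>space N. \<forall>j<n. X' j \<omega> \<in> B j}"
proof -
  have prod_indicator: "(\<Prod>j<n. indicator (B j) (Y j \<omega>) :: real) = indicator {\<omega>. \<forall>j<n. Y j \<omega> \<in> B j} \<omega>"
    for Y :: "nat \<Rightarrow> 'c \<Rightarrow> real" and \<omega>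
    by (induction n) (auto simp: indicator_def less_Suc_eq)
  have "(\<integral>\<omega>. (\<Prod>j<n. indicator (B j) (X j \<omega>)) *\<^sub>R iexp (\<Sum>j\<in>{n..<n}. 0 * X j \<omega>) \<partial>M) =
     (\<integral>\<omega>. (\<Prod>j<n. indicator (B j) (X' j \<omega>)) *\<^sub>R iexp (\<Sum>j\<in>{n..<n}. 0 * X' j \<omega>) \<partial>N)"
    using B by (intro joint_char_eq_imp_indicator_iexp_eq[OF M N X X' char_eq]) auto
  then show ?thesis
    unfolding prod_indicator scaleR_conv_of_real by (simp add: Int_def conj_commute)
qed

lemma sum_lessThan_add_split:
  fixes f :: "nat \<Rightarrow> 'a::comm_monoid_add"
  shows "(\<Sum>i<n + m. f i) = (\<Sum>i<n. f i) + (\<Sum>i<m. f (n + i))"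
  by (induction m) (simp_all add: add.assoc)

definition lin_comb :: "('t \<Rightarrow> 'w \<Rightarrow> real) \<Rightarrow> ('w \<Rightarrow> real) set" where
  "lin_comb W = {f. \<exists>(n::nat) c p. f = (\<lambda>\<omega>. \<Sum>i<n. c i * W (p i) \<omega>)}"

lemma lin_comb_W: "W x \<in> lin_comb W"
  unfolding lin_comb_def by (intro CollectI exI[of _ 1] exI[of _ "\<lambda>_. 1"] exI[of _ "\<lambda>_. x"]) simp

lemma lin_comb_zero: "(\<lambda>_. 0) \<in> lin_comb W"
  unfolding lin_comb_def by (intro CollectI exI[of _ 0]) simp

lemma lin_comb_scale:
  assumes "f \<in> lin_comb W"
  shows "(\<lambda>\<omega>. a * f \<omega>) \<in> lin_comb W"
proof -
  obtain n :: nat and c p where "f = (\<lambda>\<omega>. \<Sum>i<n. c i * W (p i) \<omega>)"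
    using assms unfolding lin_comb_def by blast
  then have "(\<lambda>\<omega>. a * f \<omega>) = (\<lambda>\<omega>. \<Sum>i<n. (a * c i) * W (p i) \<omega>)"
    by (simp add: sum_distrib_left mult.assoc)
  then show ?thesis unfolding lin_comb_def by (intro CollectI exI)
qed

lemma lin_comb_add:
  assumes "f \<in> lin_comb W" "g \<in> lin_comb W"
  shows "(\<lambda>\<omega>. f \<omega> + g \<omega>) \<in> lin_comb W"
proof -
  obtain n :: nat and c p where f: "f = (\<lambda>\<omega>. \<Sum>i<n. c i * W (p i) \<omega>)"
    using assms(1) unfolding lin_comb_def by blast
  obtain m :: nat and d q where g: "g = (\<lambda>\<omega>. \<Sum>i<m. d i * W (q i) \<omega>)"
    using assms(2) unfolding lin_comb_def by blast
  define c' where "c' i = (if i < n then c i else d (i - n))" for i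
  define p' where "p' i = (if i < n then p i else q (i - n))" for i
  have "f \<omega> + g \<omega> = (\<Sum>i<n + m. c' i * W (p' i) \<omega>)" for \<omega>
    unfolding sum_lessThan_add_split f g c'_def p'_def by simp
  then show ?thesis unfolding lin_comb_def by blast
qed

lemma lin_comb_diff: "f \<in> lin_comb W \<Longrightarrow> g \<in> lin_comb W \<Longrightarrow> (\<lambda>\<omega>. f \<omega> - g \<omega>) \<in> lin_comb W"
  using lin_comb_add[of f W "\<lambda>\<omega>. (-1) * g \<omega>"] lin_comb_scale[of g W "-1"] by simp

lemma lin_comb_sum:
  "(\<And>i. i \<in> I \<Longrightarrow> f i \<in> lin_comb W) \<Longrightarrow> (\<lambda>\<omega>. \<Sum>i\<in>I. f i \<omega>) \<in> lin_comb W"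
  by (induction I rule: infinite_finite_induct) (auto intro: lin_comb_zero lin_comb_add)

context
  fixes M :: "'a measure" and Z :: "'a \<Rightarrow> real" and \<sigma> :: real
  assumes M: "prob_space M" and Z[measurable]: "Z \<in> borel_measurable M"
    and law: "distr M borel Z = centered_gaussian \<sigma>" and \<sigma>: "\<sigma> \<ge> 0"
begin

lemma char_centered_gaussian: "(\<integral>\<omega>. iexp (t * Z \<omega>) \<partial>M) = exp (- (\<sigma>\<^sup>2 * t\<^sup>2) / 2)"
proof -
  have "(\<integral>\<omega>. iexp (t * Z \<omega>) \<partial>M) = (\<integral>x. iexp (t * x) \<partial>centered_gaussian \<sigma>)"
    by (simp add: integral_distr flip: law)
  also have "\<dots> = exp (- (\<sigma>\<^sup>2 * t\<^sup>2) / 2)"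
  proof (cases "\<sigma> = 0")
    case True
    then show ?thesis by (simp add: centered_gaussian_def integral_return)
  next
    case False
    then have "\<sigma> > 0" using \<sigma> by simp
    interpret S: prob_space std_normal_distribution
      using real_dist_normal_dist by (simp add: real_distribution_def)
    have "distributed std_normal_distribution lborel (\<lambda>x. 0 + \<sigma> * x) (normal_density (0 + \<sigma> * 0) (\<bar>\<sigma>\<bar> * 1))"
      using \<open>\<sigma> > 0\<close> by (intro S.normal_density_affine) (auto simp: distributed_def distr_id2)
    then have scaled: "distr std_normal_distribution lborel (\<lambda>x. \<sigma> * x) = density lborel (normal_density 0 \<sigma>)"
      using \<open>\<sigma> > 0\<close> by (simp add: distributed_def)
    have "(\<integral>x. iexp (t * x) \<partial>centered_gaussian \<sigma>) = (\<integral>x. iexp (t * (\<sigma> * x)) \<partial>std_normal_distribution)"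
      using False by (simp add: centered_gaussian_def integral_distr flip: scaled)
    also have "\<dots> = char std_normal_distribution (t * \<sigma>)"
      by (simp add: char_def mult.assoc)
    finally show ?thesis
      by (simp add: char_std_normal_distribution power_mult_distrib mult.commute)
  qed
  finally show ?thesis .
qed

lemma centered_gaussian_second_moment:
  "integrable M (\<lambda>\<omega>. (Z \<omega>)\<^sup>2)" "(\<integral>\<omega>. (Z \<omega>)\<^sup>2 \<partial>M) = \<sigma>\<^sup>2"
proof -
  have "integrable (centered_gaussian \<sigma>) (\<lambda>x. x\<^sup>2) \<and> (\<integral>x. x\<^sup>2 \<partial>centered_gaussian \<sigma>) = \<sigma>\<^sup>2"
  proof (cases "\<sigma> = 0")
    case True
    have "integrable (return borel (0::real)) (\<lambda>x. x\<^sup>2)"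
      by (intro finite_measure.integrable_const_bound[where B=0]) (auto intro!: finite_measureI simp: AE_return)
    then show ?thesis using True by (simp add: centered_gaussian_def integral_return)
  next
    case False
    then have "\<sigma> > 0" using \<sigma> by simp
    then show ?thesis
      using integrable_normal_moment[of \<sigma> 0 2] integral_normal_moment_even[of \<sigma> 0 1] False
      by (simp add: centered_gaussian_def integrable_density integral_density power2_eq_square)
  qed
  then show "integrable M (\<lambda>\<omega>. (Z \<omega>)\<^sup>2)" "(\<integral>\<omega>. (Z \<omega>)\<^sup>2 \<partial>M) = \<sigma>\<^sup>2"
    by (simp_all add: integrable_distr_eq integral_distr flip: law)
qed

lemma centered_gaussian_tail_pos:
  assumes "\<sigma> > 0"
  shows "measure M {\<omega>\<in>space M. t \<le> Z \<omega>} > 0"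
proof -
  interpret prob_space M by (rule M)
  have density_pos: "normal_density 0 \<sigma> x \<noteq> 0" for x
    using normal_density_pos[OF assms, of 0 x] by simp
  have "emeasure M {\<omega>\<in>space M. t \<le> Z \<omega>} = emeasure (centered_gaussian \<sigma>) {t..}"
    by (simp add: emeasure_distr vimage_def Int_def conj_commute flip: law)
  also have "\<dots> = (\<integral>\<^sup>+x. ennreal (normal_density 0 \<sigma> x) * indicator {t..} x \<partial>lborel)"
    using assms by (simp add: centered_gaussian_def emeasure_density)
  also have "\<dots> > 0"
  proof (rule ccontr)
    assume "\<not> ?thesis"
    then have "AE x in lborel. ennreal (normal_density 0 \<sigma> x) * indicator {t..} x = 0"
      by (simp add: nn_integral_0_iff_AE)
    then have "AE x in lborel. x \<notin> {t..t+1}"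
      by eventually_elim (use density_pos in \<open>auto simp: indicator_def\<close>)
    then have "{t..t+1} \<in> null_sets lborel"
      by (subst AE_iff_null_sets) auto
    then show False by (simp add: null_sets_def)
  qed
  finally show ?thesis by (simp add: emeasure_eq_measure)
qed

end

lemma abs_mult_le_weighted_squares:
  fixes a b \<mu> :: real
  assumes "\<mu> > 0"
  shows "\<bar>a * b\<bar> \<le> (\<mu> * a\<^sup>2 + b\<^sup>2 / \<mu>) / 2"
proof -
  have "0 \<le> (\<mu> * \<bar>a\<bar> - \<bar>b\<bar>)\<^sup>2" by simp
  then have "2 * \<mu> * \<bar>a * b\<bar> \<le> \<mu>\<^sup>2 * a\<^sup>2 + b\<^sup>2"
    by (simp add: power2_diff power_mult_distrib abs_mult algebra_simps)
  then show ?thesis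
    using assms by (simp add: field_simps power2_eq_square)
qed

lemma integrable_mult_square_integrable:
  fixes f g :: "'a \<Rightarrow> real"
  assumes [measurable]: "f \<in> borel_measurable M" "g \<in> borel_measurable M"
    and "integrable M (\<lambda>x. (f x)\<^sup>2)" "integrable M (\<lambda>x. (g x)\<^sup>2)"
  shows "integrable M (\<lambda>x. f x * g x)"
proof (rule Bochner_Integration.integrable_bound)
  show "integrable M (\<lambda>x. (1 * (f x)\<^sup>2 + (g x)\<^sup>2 / 1) / 2)"
    using assms(3,4) by simp
  show "AE x in M. norm (f x * g x) \<le> norm ((1 * (f x)\<^sup>2 + (g x)\<^sup>2 / 1) / 2)"
    using abs_mult_le_weighted_squares[of 1 "f _" "g _"] by (intro AE_I2) simp
qed simp

lemma abs_integral_mult_le_weighted_squares: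
  fixes f g :: "'a \<Rightarrow> real"
  assumes [measurable]: "f \<in> borel_measurable M" "g \<in> borel_measurable M"
    and f: "integrable M (\<lambda>x. (f x)\<^sup>2)" and g: "integrable M (\<lambda>x. (g x)\<^sup>2)" and "\<mu> > 0"
  shows "\<bar>\<integral>x. f x * g x \<partial>M\<bar> \<le> (\<mu> * (\<integral>x. (f x)\<^sup>2 \<partial>M) + (\<integral>x. (g x)\<^sup>2 \<partial>M) / \<mu>) / 2"
proof -
  have "\<bar>\<integral>x. f x * g x \<partial>M\<bar> \<le> (\<integral>x. \<bar>f x * g x\<bar> \<partial>M)"
    by (rule integral_abs_bound)
  also have "\<dots> \<le> (\<integral>x. (\<mu> * (f x)\<^sup>2 + (g x)\<^sup>2 / \<mu>) / 2 \<partial>M)"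
    using integrable_mult_square_integrable[OF assms(1-4)] f g abs_mult_le_weighted_squares[OF \<open>\<mu> > 0\<close>]
    by (intro integral_mono) auto
  also have "\<dots> = (\<mu> * (\<integral>x. (f x)\<^sup>2 \<partial>M) + (\<integral>x. (g x)\<^sup>2 \<partial>M) / \<mu>) / 2"
    using f g by simp
  finally show ?thesis .
qed

lemma compact_dense_sequence:
  fixes S :: "'a::metric_space set"
  assumes "compact S" "S \<noteq> {}"
  obtains d :: "nat \<Rightarrow> 'a" where "range d \<subseteq> S" "closure (range d) = S"
proof -
  have "\<forall>n::nat. \<exists>k. finite k \<and> k \<subseteq> S \<and> S \<subseteq> (\<Union>x\<in>k. ball x (1 / Suc n))"
    using seq_compact_imp_totally_bounded[OF compact_imp_seq_compact[OF assms(1)]] by simp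
  then obtain k where k: "\<And>n. finite (k n)" "\<And>n. k n \<subseteq> S"
    "\<And>n. S \<subseteq> (\<Union>x\<in>k n. ball x (1 / Suc n))"
    by metis
  define T where "T = (\<Union>n. k n)"
  have "S \<subseteq> closure T"
  proof (intro subsetI closure_approachable[THEN iffD2] allI impI)
    fix x and e :: real assume "x \<in> S" "e > 0"
    then obtain n where "1 / Suc n < e" using nat_approx_posE by blast
    moreover obtain y where "y \<in> k n" "dist y x < 1 / Suc n"
      using k(3)[of n] \<open>x \<in> S\<close> by (auto simp: dist_commute)
    ultimately show "\<exists>y\<in>T. dist y x < e" unfolding T_def by force
  qed
  moreover have "countable T" "T \<subseteq> S" using k(1,2) by (auto simp: T_def countable_finite)
  moreover have "T \<noteq> {}" using calculation \<open>S \<noteq> {}\<close> by auto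
  ultimately show ?thesis
    using that[of "from_nat_into T"] range_from_nat_into closure_minimal[of T S]
      compact_imp_closed[OF assms(1)] by (simp add: subset_antisym)
qed

lemma compact_finite_partition_balls:
  fixes S :: "'a::metric_space set"
  assumes "compact S" and r: "\<forall>c\<in>S. r c > 0"
  obtains k :: nat and c P where "\<And>j. j < k \<Longrightarrow> c j \<in> S"
    and "\<And>j. P j \<subseteq> S \<inter> ball (c j) (r (c j))" and "\<And>j. P j \<in> sets (restrict_space borel S)"
    and "disjoint_family P" and "(\<Union>j<k. P j) = S"
proof -
  obtain T where "T \<subseteq> S" "finite T" and cover: "S \<subseteq> (\<Union>c\<in>T. ball c (r c))"
    using compactE_image[OF assms(1), of S "\<lambda>c. ball c (r c)"] r by force
  then obtain cs where cs: "set cs = T" using finite_list by blast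
  define A where "A j = S \<inter> ball (cs ! j) (r (cs ! j))" for j
  have "range A \<subseteq> sets (restrict_space borel S)"
    by (auto simp: A_def sets_restrict_space)
  then have "range (disjointed A) \<subseteq> sets (restrict_space borel S)"
    by (rule sets.range_disjointed_sets)
  moreover have "(\<Union>j<length cs. disjointed A j) = S"
  proof -
    have "(\<Union>j<length cs. A j) = S"
      using cover cs by (fastforce simp: A_def in_set_conv_nth)
    then show ?thesis by (simp add: atLeast0LessThan[symmetric] finite_UN_disjointed_eq)
  qed
  moreover have "cs ! j \<in> S" if "j < length cs" for j
    using that cs \<open>T \<subseteq> S\<close> by auto
  ultimately show ?thesis
    using that[of "length cs" "\<lambda>j. cs ! j" "disjointed A"]
      disjointed_subset[of A] disjoint_family_disjointed[of A] by (auto simp: A_def)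
qed

lemma (in finite_measure) integral_le_partition_sum:
  fixes f :: "'a \<Rightarrow> real" and P :: "nat \<Rightarrow> 'a set"
  assumes f: "integrable M f" and P: "\<And>j. P j \<in> sets M"
    and disj: "disjoint_family_on P {..<k}" and cover: "(\<Union>j<k. P j) = space M"
    and le: "\<And>j y. j < k \<Longrightarrow> y \<in> P j \<Longrightarrow> f y \<le> a j"
  shows "(\<integral>y. f y \<partial>M) \<le> (\<Sum>j<k. measure M (P j) * a j)"
proof -
  have int: "integrable M (\<lambda>y. indicator (P j) y * f y)" for j
    using integrable_mult_indicator[OF P f] by simp
  have "(\<integral>y. f y \<partial>M) = (\<integral>y. (\<Sum>j<k. indicator (P j) y * f y) \<partial>M)"
  proof (rule Bochner_Integration.integral_cong)
    fix y assume "y \<in> space M"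
    have "indicator (\<Union>j<k. P j) y = (\<Sum>j<k. indicator (P j) y :: real)"
      by (rule indicator_UN_disjoint) (simp_all add: disj)
    then have "(\<Sum>j<k. indicator (P j) y) = (1::real)"
      using cover \<open>y \<in> space M\<close> by simp
    then show "f y = (\<Sum>j<k. indicator (P j) y * f y)" by (simp flip: sum_distrib_right)
  qed simp
  also have "\<dots> = (\<Sum>j<k. \<integral>y. indicator (P j) y * f y \<partial>M)"
    by (intro Bochner_Integration.integral_sum int)
  also have "\<dots> \<le> (\<Sum>j<k. \<integral>y. indicator (P j) y * a j \<partial>M)"
  proof (intro sum_mono integral_mono int)
    show "integrable M (\<lambda>y. indicator (P j) y * a j)" for j
      using integrable_mult_indicator[OF P integrable_const, where 'b=real] by simp
    show "indicator (P j) y * f y \<le> indicator (P j) y * a j" if "j \<in> {..<k}" for j y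
      using le that by (simp add: indicator_def)
  qed
  also have "\<dots> = (\<Sum>j<k. measure M (P j) * a j)"
    using P by (simp add: integral_mult_left_zero)
  finally show ?thesis .
qed

lemma integral_lower_bound_imp_finite_sum_lower_bound:
  fixes \<mu> :: "'a::metric_space measure" and f :: "'a \<Rightarrow> 'a \<Rightarrow> real"
  assumes "finite_measure \<mu>" and sets_\<mu>: "sets \<mu> = sets (restrict_space borel S)" and "compact S"
    and lower: "\<forall>x\<in>S. \<epsilon> \<le> (\<integral>y. f x y \<partial>\<mu>)" and "\<epsilon> > 0"
    and equicont: "\<forall>\<delta>>0. \<forall>y0\<in>S.
      \<exists>r>0. \<forall>y\<in>S. dist y y0 < r \<longrightarrow> (\<forall>x\<in>S. \<bar>f x y - f x y0\<bar> \<le> \<delta>)"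
  shows "\<exists>(k::nat) c w. (\<forall>j<k. c j \<in> S) \<and> (\<forall>x\<in>S. \<epsilon> / 2 \<le> (\<Sum>j<k. w j * f x (c j)))"
proof -
  interpret finite_measure \<mu> by fact
  have space_\<mu>: "space \<mu> = S"
    using sets_eq_imp_space_eq[OF sets_\<mu>] by (simp add: space_restrict_space)
  define m where "m = measure \<mu> S"
  define \<delta> where "\<delta> = \<epsilon> / (2 * (m + 1))"
  have "m \<ge> 0" by (simp add: m_def)
  then have "\<delta> > 0" using \<open>\<epsilon> > 0\<close> by (simp add: \<delta>_def)
  have "\<delta> * m = \<epsilon> / 2 * (m / (m + 1))" by (simp add: \<delta>_def)
  also have "\<dots> \<le> \<epsilon> / 2" using \<open>\<epsilon> > 0\<close> \<open>m \<ge> 0\<close> by (intro mult_left_le) auto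
  finally have "\<delta> * m \<le> \<epsilon> / 2" .
  have "\<forall>y0\<in>S. \<exists>r>0. \<forall>y\<in>S. dist y y0 < r \<longrightarrow> (\<forall>x\<in>S. \<bar>f x y - f x y0\<bar> \<le> \<delta>)"
    using equicont \<open>\<delta> > 0\<close> by blast
  then obtain r where r_pos: "\<forall>y0\<in>S. r y0 > 0"
    and r: "\<And>y0 y x. y0 \<in> S \<Longrightarrow> y \<in> S \<Longrightarrow> dist y y0 < r y0 \<Longrightarrow> x \<in> S \<Longrightarrow> \<bar>f x y - f x y0\<bar> \<le> \<delta>"
    by (auto dest!: bchoice)
  obtain k :: nat and c P where c: "\<And>j. j < k \<Longrightarrow> c j \<in> S"
    and P_ball: "\<And>j. P j \<subseteq> S \<inter> ball (c j) (r (c j))" and P_sets: "\<And>j. P j \<in> sets (restrict_space borel S)"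
    and P_disj: "disjoint_family P" and P_Un: "(\<Union>j<k. P j) = S"
    using compact_finite_partition_balls[OF \<open>compact S\<close> r_pos] by blast
  have P: "P j \<in> sets \<mu>" for j using P_sets sets_\<mu> by simp
  have P_disj': "disjoint_family_on P {..<k}"
    using P_disj by (rule disjoint_family_on_mono[rotated]) simp
  have "\<epsilon> / 2 \<le> (\<Sum>j<k. measure \<mu> (P j) * f x (c j))" if "x \<in> S" for x
  proof -
    have "integrable \<mu> (f x)"
      using lower that \<open>\<epsilon> > 0\<close> not_integrable_integral_eq by fastforce
    moreover have "f x y \<le> f x (c j) + \<delta>" if "j < k" "y \<in> P j" for j y
      using P_ball[of j] r[OF c _ _ \<open>x \<in> S\<close>, of j y] that by (force simp: dist_commute)
    ultimately have "\<epsilon> \<le> (\<Sum>j<k. measure \<mu> (P j) * (f x (c j) + \<delta>))"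
      using lower that P_disj' P_Un
      by (intro order_trans[OF _ integral_le_partition_sum[OF _ P]]) (auto simp: space_\<mu>)
    also have "\<dots> = (\<Sum>j<k. measure \<mu> (P j) * f x (c j)) + \<delta> * (\<Sum>j<k. measure \<mu> (P j))"
      by (simp add: distrib_left sum.distrib sum_distrib_left mult.commute)
    also have "(\<Sum>j<k. measure \<mu> (P j)) = m"
      using P P_disj' P_Un by (simp add: m_def finite_measure_finite_Union[symmetric] image_subset_iff)
    finally show ?thesis using \<open>\<delta> * m \<le> \<epsilon> / 2\<close> by simp
  qed
  then show ?thesis
    using c by (intro exI[of _ k] exI[of _ c] exI[of _ "\<lambda>j. measure \<mu> (P j)"]) auto
qed

lemma (in prob_space) AE_bounded_imp_pos_prob_bounded:
  fixes X :: "nat \<Rightarrow> 'a \<Rightarrow> real"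
  assumes [measurable]: "\<And>j. X j \<in> borel_measurable M"
    and bounded: "AE \<omega> in M. \<exists>B. \<forall>j. \<bar>X j \<omega>\<bar> \<le> B"
  shows "\<exists>b. prob {\<omega>\<in>space M. \<forall>j. \<bar>X j \<omega>\<bar> \<le> b} > 0"
proof (rule ccontr)
  assume "\<nexists>b. prob {\<omega>\<in>space M. \<forall>j. \<bar>X j \<omega>\<bar> \<le> b} > 0"
  then have "{\<omega>\<in>space M. \<forall>j. \<bar>X j \<omega>\<bar> \<le> real n} \<in> null_sets M" for n
    by (simp add: null_sets_def emeasure_eq_measure not_less measure_le_0_iff)
  then have "AE \<omega> in M. \<forall>n. \<omega> \<notin> {\<omega>\<in>space M. \<forall>j. \<bar>X j \<omega>\<bar> \<le> real n}"
    by (intro AE_all_countable[THEN iffD2] allI AE_not_in)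
  with bounded AE_space have "AE \<omega> in M. False"
  proof eventually_elim
    case (elim \<omega>)
    then obtain B where "\<forall>j. \<bar>X j \<omega>\<bar> \<le> B" by blast
    moreover obtain n where "B \<le> real n" using real_arch_simple by blast
    ultimately have "\<forall>j. \<bar>X j \<omega>\<bar> \<le> real n" by (auto intro: order_trans)
    then show False using elim by auto
  qed
  then show False by simp
qed

lemma (in prob_space) AE_imp_pos_prob_subset:
  assumes "E \<in> sets M" "prob E > 0" "AE \<omega> in M. P \<omega>"
  shows "\<exists>A\<in>sets M. A \<subseteq> {\<omega>\<in>E. P \<omega>} \<and> prob A > 0"
proof -
  obtain N where N: "N \<in> null_sets M" "{\<omega>\<in>space M. \<not> P \<omega>} \<subseteq> N"
    using assms(3) by (auto elim!: AE_E simp: null_sets_def)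
  then have "E - N \<in> sets M" "prob (E - N) > 0" "E - N \<subseteq> {\<omega>\<in>E. P \<omega>}"
    using assms(1,2) sets.sets_into_space[OF assms(1)] by (auto simp: measure_Diff_null_set)
  then show ?thesis by blast
qed

locale gaussian_field =
  fixes M :: "'w measure" and W :: "'t \<Rightarrow> 'w \<Rightarrow> real"
  assumes centered_gaussian_field: "centered_gaussian_field M W"

sublocale gaussian_field \<subseteq> prob_space M
  using centered_gaussian_field by (simp add: centered_gaussian_field_def)

context gaussian_field
begin

lemma measurable_W [measurable]: "W x \<in> borel_measurable M"
  using centered_gaussian_field by (simp add: centered_gaussian_field_def)

lemma
  assumes "f \<in> lin_comb W"
  shows lin_comb_measurable [measurable]: "f \<in> borel_measurable M"
    and lin_comb_centered_gaussian: "\<exists>\<sigma>\<ge>0. distr M borel f = centered_gaussian \<sigma>"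
proof -
  obtain n :: nat and c p where f: "f = (\<lambda>\<omega>. \<Sum>i<n. c i * W (p i) \<omega>)"
    using assms unfolding lin_comb_def by blast
  then show "f \<in> borel_measurable M" by simp
  show "\<exists>\<sigma>\<ge>0. distr M borel f = centered_gaussian \<sigma>"
    using centered_gaussian_field unfolding centered_gaussian_field_def f by blast
qed

lemma
  assumes "f \<in> lin_comb W"
  shows integrable_lin_comb_square: "integrable M (\<lambda>\<omega>. (f \<omega>)\<^sup>2)"
    and char_lin_comb: "(\<integral>\<omega>. iexp (t * f \<omega>) \<partial>M) = exp (- ((\<integral>\<omega>. (f \<omega>)\<^sup>2 \<partial>M) * t\<^sup>2) / 2)"
proof -
  obtain \<sigma> where "\<sigma> \<ge> 0" and law: "distr M borel f = centered_gaussian \<sigma>"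
    using lin_comb_centered_gaussian[OF assms] by blast
  note gaussian = centered_gaussian_second_moment[OF prob_space_axioms _ law \<open>\<sigma> \<ge> 0\<close>]
    char_centered_gaussian[OF prob_space_axioms _ law \<open>\<sigma> \<ge> 0\<close>]
  show "integrable M (\<lambda>\<omega>. (f \<omega>)\<^sup>2)" using gaussian assms by simp
  show "(\<integral>\<omega>. iexp (t * f \<omega>) \<partial>M) = exp (- ((\<integral>\<omega>. (f \<omega>)\<^sup>2 \<partial>M) * t\<^sup>2) / 2)"
    using gaussian assms by simp
qed

lemma integrable_lin_comb_mult:
  "f \<in> lin_comb W \<Longrightarrow> g \<in> lin_comb W \<Longrightarrow> integrable M (\<lambda>\<omega>. f \<omega> * g \<omega>)"
  by (intro integrable_mult_square_integrable integrable_lin_comb_square lin_comb_measurable)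

lemma abs_covariance_le:
  "f \<in> lin_comb W \<Longrightarrow> g \<in> lin_comb W \<Longrightarrow> \<mu> > 0 \<Longrightarrow>
    \<bar>\<integral>\<omega>. f \<omega> * g \<omega> \<partial>M\<bar> \<le> (\<mu> * (\<integral>\<omega>. (f \<omega>)\<^sup>2 \<partial>M) + (\<integral>\<omega>. (g \<omega>)\<^sup>2 \<partial>M) / \<mu>) / 2"
  by (intro abs_integral_mult_le_weighted_squares integrable_lin_comb_square lin_comb_measurable)

lemma char_orthogonal_sum:
  assumes Y: "Y \<in> lin_comb W" and L: "L \<in> lin_comb W" and orth: "(\<integral>\<omega>. Y \<omega> * L \<omega> \<partial>M) = 0"
  shows "(\<integral>\<omega>. iexp (s * Y \<omega> + L \<omega>) \<partial>M) = (\<integral>\<omega>. iexp (s * Y \<omega>) \<partial>M) * (\<integral>\<omega>. iexp (L \<omega>) \<partial>M)"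
proof -
  have "(\<lambda>\<omega>. (s * Y \<omega> + L \<omega>)\<^sup>2) = (\<lambda>\<omega>. s\<^sup>2 * (Y \<omega>)\<^sup>2 + (L \<omega>)\<^sup>2 + 2 * s * (Y \<omega> * L \<omega>))"
    by (simp add: fun_eq_iff power2_eq_square algebra_simps)
  then have variance: "(\<integral>\<omega>. (s * Y \<omega> + L \<omega>)\<^sup>2 \<partial>M) = s\<^sup>2 * (\<integral>\<omega>. (Y \<omega>)\<^sup>2 \<partial>M) + (\<integral>\<omega>. (L \<omega>)\<^sup>2 \<partial>M)"
    using integrable_lin_comb_square[OF Y] integrable_lin_comb_square[OF L]
      integrable_lin_comb_mult[OF Y L] orth by simp
  have sum: "(\<lambda>\<omega>. s * Y \<omega> + L \<omega>) \<in> lin_comb W" using Y L by (intro lin_comb_add lin_comb_scale)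
  have "(\<integral>\<omega>. iexp (s * Y \<omega> + L \<omega>) \<partial>M) = exp (- (\<integral>\<omega>. (s * Y \<omega> + L \<omega>)\<^sup>2 \<partial>M) / 2)"
    using char_lin_comb[OF sum, of 1] by (simp del: of_real_mult of_real_add)
  also have "\<dots> = exp (- ((\<integral>\<omega>. (Y \<omega>)\<^sup>2 \<partial>M) * s\<^sup>2) / 2) * exp (- ((\<integral>\<omega>. (L \<omega>)\<^sup>2 \<partial>M) * 1\<^sup>2) / 2)"
    unfolding variance by (simp add: field_simps flip: exp_add)
  also have "\<dots> = (\<integral>\<omega>. iexp (s * Y \<omega>) \<partial>M) * (\<integral>\<omega>. iexp (L \<omega>) \<partial>M)"
    using char_lin_comb[OF Y, of s] char_lin_comb[OF L, of 1] by simp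
  finally show ?thesis .
qed

lemma char_orthogonal_eq_char_product:
  fixes R :: "nat \<Rightarrow> 'w \<Rightarrow> real"
  assumes Y: "Y \<in> lin_comb W" and R: "\<And>j. R j \<in> lin_comb W"
    and orth: "\<And>j. (\<integral>\<omega>. Y \<omega> * R j \<omega> \<partial>M) = 0"
  shows "(\<integral>\<omega>. iexp (s * Y \<omega> + (\<Sum>j<k. \<theta> j * R j \<omega>)) \<partial>M)
    = (\<integral>z. iexp (s * Y (fst z) + (\<Sum>j<k. \<theta> j * R j (snd z))) \<partial>(M \<Otimes>\<^sub>M M))"
proof -
  interpret MM: pair_prob_space M M ..
  have [measurable]: "Y \<in> borel_measurable M" "\<And>j. R j \<in> borel_measurable M"
    using Y R by (auto intro: lin_comb_measurable)
  define L where "L \<omega> = (\<Sum>j<k. \<theta> j * R j \<omega>)" for \<omega>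
  have L: "L \<in> lin_comb W" unfolding L_def using R by (intro lin_comb_sum lin_comb_scale)
  have "(\<integral>\<omega>. Y \<omega> * L \<omega> \<partial>M) = (\<integral>\<omega>. (\<Sum>j<k. \<theta> j * (Y \<omega> * R j \<omega>)) \<partial>M)"
    unfolding L_def by (simp add: sum_distrib_left algebra_simps)
  also have "\<dots> = (\<Sum>j<k. \<theta> j * (\<integral>\<omega>. Y \<omega> * R j \<omega> \<partial>M))"
    using integrable_lin_comb_mult[OF Y R] by (subst Bochner_Integration.integral_sum) auto
  finally have YL: "(\<integral>\<omega>. Y \<omega> * L \<omega> \<partial>M) = 0" using orth by simp
  have "integrable (M \<Otimes>\<^sub>M M) (\<lambda>z. iexp (s * Y (fst z)) * iexp (L (snd z)))"
    unfolding L_def by (intro MM.integrable_const_bound[where B=1] AE_I2) (auto simp: norm_mult)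
  then have "(\<integral>z. iexp (s * Y (fst z)) * iexp (L (snd z)) \<partial>(M \<Otimes>\<^sub>M M))
      = (\<integral>\<omega>. iexp (s * Y \<omega>) \<partial>M) * (\<integral>\<omega>. iexp (L \<omega>) \<partial>M)"
    by (simp add: MM.integral_fst'[symmetric])
  also have "\<dots> = (\<integral>\<omega>. iexp (s * Y \<omega> + L \<omega>) \<partial>M)"
    by (rule char_orthogonal_sum[OF Y L YL, symmetric])
  finally show ?thesis
    by (simp add: L_def distrib_left exp_add)
qed

lemma orthogonal_lin_comb_indep:
  fixes R :: "nat \<Rightarrow> 'w \<Rightarrow> real"
  assumes Y: "Y \<in> lin_comb W" and R: "\<And>j. R j \<in> lin_comb W"
    and orth: "\<And>j. (\<integral>\<omega>. Y \<omega> * R j \<omega> \<partial>M) = 0"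
    and [measurable]: "A \<in> sets borel" "\<And>j. B j \<in> sets borel"
  shows "prob {\<omega>\<in>space M. Y \<omega> \<in> A \<and> (\<forall>j<k. R j \<omega> \<in> B j)} =
         prob {\<omega>\<in>space M. Y \<omega> \<in> A} * prob {\<omega>\<in>space M. \<forall>j<k. R j \<omega> \<in> B j}"
proof -
  interpret MM: pair_prob_space M M ..
  have [measurable]: "Y \<in> borel_measurable M" "\<And>j. R j \<in> borel_measurable M"
    using Y R by (auto intro: lin_comb_measurable)
  define X where "X = case_nat Y R"
  define X' where "X' = case_nat (\<lambda>z. Y (fst z)) (\<lambda>j z. R j (snd z))"
  have [measurable]: "X j \<in> borel_measurable M" "X' j \<in> borel_measurable (M \<Otimes>\<^sub>M M)" for j
    by (cases j; simp add: X_def X'_def)+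
  have "(\<integral>\<omega>. iexp (\<Sum>j<Suc k. \<theta> j * X j \<omega>) \<partial>M) = (\<integral>z. iexp (\<Sum>j<Suc k. \<theta> j * X' j z) \<partial>(M \<Otimes>\<^sub>M M))"
    for \<theta>
    unfolding sum.lessThan_Suc_shift X_def X'_def
    using char_orthogonal_eq_char_product[OF Y R orth, where s="\<theta> 0" and \<theta>="\<lambda>j. \<theta> (Suc j)"] by simp
  then have "prob {\<omega>\<in>space M. \<forall>j<Suc k. X j \<omega> \<in> case_nat A B j}
      = measure (M \<Otimes>\<^sub>M M) {z\<in>space (M \<Otimes>\<^sub>M M). \<forall>j<Suc k. X' j z \<in> case_nat A B j}"
    by (intro joint_char_eq_imp_measure_eq[OF prob_space_axioms MM.prob_space_axioms])
      (auto split: nat.split)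
  also have "{z\<in>space (M \<Otimes>\<^sub>M M). \<forall>j<Suc k. X' j z \<in> case_nat A B j}
      = {\<omega>\<in>space M. Y \<omega> \<in> A} \<times> {\<omega>\<in>space M. \<forall>j<k. R j \<omega> \<in> B j}"
    by (auto simp: All_less_Suc2 X'_def space_pair_measure)
  also have "measure (M \<Otimes>\<^sub>M M) \<dots> = prob {\<omega>\<in>space M. Y \<omega> \<in> A} * prob {\<omega>\<in>space M. \<forall>j<k. R j \<omega> \<in> B j}"
    by (simp add: measure_def emeasure_pair_measure_Times enn2real_mult)
  finally show ?thesis
    by (simp add: All_less_Suc2 X_def)
qed

lemma orthogonal_lin_comb_indep_countable:
  fixes R :: "nat \<Rightarrow> 'w \<Rightarrow> real"
  assumes Y: "Y \<in> lin_comb W" and R: "\<And>j. R j \<in> lin_comb W"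
    and orth: "\<And>j. (\<integral>\<omega>. Y \<omega> * R j \<omega> \<partial>M) = 0"
    and [measurable]: "A \<in> sets borel" "\<And>j. B j \<in> sets borel"
  shows "prob {\<omega>\<in>space M. Y \<omega> \<in> A \<and> (\<forall>j. R j \<omega> \<in> B j)} =
         prob {\<omega>\<in>space M. Y \<omega> \<in> A} * prob {\<omega>\<in>space M. \<forall>j. R j \<omega> \<in> B j}"
proof -
  have [measurable]: "Y \<in> borel_measurable M" "\<And>j. R j \<in> borel_measurable M"
    using Y R by (auto intro: lin_comb_measurable)
  define E where "E k = {\<omega>\<in>space M. Y \<omega> \<in> A \<and> (\<forall>j<k. R j \<omega> \<in> B j)}" for k
  define F where "F k = {\<omega>\<in>space M. \<forall>j<k. R j \<omega> \<in> B j}" for k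
  have E: "range E \<subseteq> sets M" "decseq E" and F: "range F \<subseteq> sets M" "decseq F"
    unfolding E_def F_def decseq_def by auto
  have "(\<Inter>k. E k) = {\<omega>\<in>space M. Y \<omega> \<in> A \<and> (\<forall>j. R j \<omega> \<in> B j)}"
    unfolding E_def by auto
  then have "(\<lambda>k. prob (E k)) \<longlonglongrightarrow> prob {\<omega>\<in>space M. Y \<omega> \<in> A \<and> (\<forall>j. R j \<omega> \<in> B j)}"
    using finite_Lim_measure_decseq[OF E] by simp
  moreover have "(\<Inter>k. F k) = {\<omega>\<in>space M. \<forall>j. R j \<omega> \<in> B j}"
    unfolding F_def by auto
  then have "(\<lambda>k. prob {\<omega>\<in>space M. Y \<omega> \<in> A} * prob (F k))
      \<longlonglongrightarrow> prob {\<omega>\<in>space M. Y \<omega> \<in> A} * prob {\<omega>\<in>space M. \<forall>j. R j \<omega> \<in> B j}"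
    using finite_Lim_measure_decseq[OF F] by (simp add: tendsto_mult_left)
  moreover have "prob (E k) = prob {\<omega>\<in>space M. Y \<omega> \<in> A} * prob (F k)" for k
    unfolding E_def F_def by (rule orthogonal_lin_comb_indep[OF Y R orth]) simp_all
  ultimately show ?thesis using LIMSEQ_unique by simp
qed

lemma tendsto_covariance_zero:
  assumes g: "g \<in> lin_comb W" and D: "\<And>x. D x \<in> lin_comb W"
    and lim: "((\<lambda>x. \<integral>\<omega>. (D x \<omega>)\<^sup>2 \<partial>M) \<longlongrightarrow> 0) F"
  shows "((\<lambda>x. \<integral>\<omega>. D x \<omega> * g \<omega> \<partial>M) \<longlongrightarrow> 0) F"
proof (rule tendstoI)
  fix e :: real assume "e > 0"
  define C where "C = (\<integral>\<omega>. (g \<omega>)\<^sup>2 \<partial>M)"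
  have "C \<ge> 0" unfolding C_def by simp
  define \<mu> where "\<mu> = e / (C + 1)"
  have "\<mu> > 0" "\<mu> * C < e" using \<open>e > 0\<close> \<open>C \<ge> 0\<close> by (auto simp: \<mu>_def field_simps)
  from lim have "\<forall>\<^sub>F x in F. dist (\<integral>\<omega>. (D x \<omega>)\<^sup>2 \<partial>M) 0 < \<mu> * e"
    using \<open>\<mu> > 0\<close> \<open>e > 0\<close> by (intro tendstoD) auto
  then show "\<forall>\<^sub>F x in F. dist (\<integral>\<omega>. D x \<omega> * g \<omega> \<partial>M) 0 < e"
  proof eventually_elim
    case (elim x)
    have "\<bar>\<integral>\<omega>. g \<omega> * D x \<omega> \<partial>M\<bar> \<le> (\<mu> * C + (\<integral>\<omega>. (D x \<omega>)\<^sup>2 \<partial>M) / \<mu>) / 2"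
      unfolding C_def by (rule abs_covariance_le[OF g D \<open>\<mu> > 0\<close>])
    moreover have "(\<integral>\<omega>. (D x \<omega>)\<^sup>2 \<partial>M) / \<mu> < e"
      using elim \<open>\<mu> > 0\<close> by (simp add: field_simps dist_real_def)
    ultimately show ?case using \<open>\<mu> * C < e\<close> by (simp add: dist_real_def mult.commute)
  qed
qed

lemma variance_pos_if_covariance_ne_zero:
  assumes "f \<in> lin_comb W" "g \<in> lin_comb W" "(\<integral>\<omega>. f \<omega> * g \<omega> \<partial>M) \<noteq> 0"
  shows "(\<integral>\<omega>. (g \<omega>)\<^sup>2 \<partial>M) > 0"
proof (rule ccontr)
  have [measurable]: "f \<in> borel_measurable M" "g \<in> borel_measurable M"
    using assms by (auto intro: lin_comb_measurable)
  assume "\<not> ?thesis"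
  then have "AE \<omega> in M. (g \<omega>)\<^sup>2 = 0"
    using integrable_lin_comb_square[OF assms(2)] lin_comb_measurable[OF assms(2)]
    by (subst integral_nonneg_eq_0_iff_AE[symmetric]) (auto intro: order_antisym)
  then have "(\<integral>\<omega>. f \<omega> * g \<omega> \<partial>M) = 0"
    by (subst integral_cong_AE[where g="\<lambda>_. 0"]) auto
  with assms(3) show False by simp
qed

lemma orthogonal_residual:
  assumes Y: "Y \<in> lin_comb W" and f: "f \<in> lin_comb W" and "(\<integral>\<omega>. (Y \<omega>)\<^sup>2 \<partial>M) \<noteq> 0"
  defines "c \<equiv> (\<integral>\<omega>. f \<omega> * Y \<omega> \<partial>M) / (\<integral>\<omega>. (Y \<omega>)\<^sup>2 \<partial>M)"
  shows "(\<integral>\<omega>. Y \<omega> * (f \<omega> - c * Y \<omega>) \<partial>M) = 0"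
proof -
  have "(\<integral>\<omega>. Y \<omega> * (f \<omega> - c * Y \<omega>) \<partial>M) = (\<integral>\<omega>. f \<omega> * Y \<omega> - c * (Y \<omega>)\<^sup>2 \<partial>M)"
    by (rule Bochner_Integration.integral_cong) (simp_all add: algebra_simps power2_eq_square)
  also have "\<dots> = (\<integral>\<omega>. f \<omega> * Y \<omega> \<partial>M) - c * (\<integral>\<omega>. (Y \<omega>)\<^sup>2 \<partial>M)"
    using integrable_lin_comb_mult[OF f Y] integrable_lin_comb_square[OF Y] by simp
  also have "\<dots> = 0" using assms(3) by (simp add: c_def)
  finally show ?thesis .
qed

lemma lin_comb_tail_pos:
  assumes "Y \<in> lin_comb W" "(\<integral>\<omega>. (Y \<omega>)\<^sup>2 \<partial>M) > 0"
  shows "prob {\<omega>\<in>space M. t \<le> Y \<omega>} > 0"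
proof -
  obtain \<sigma> where "\<sigma> \<ge> 0" and law: "distr M borel Y = centered_gaussian \<sigma>"
    using lin_comb_centered_gaussian[OF assms(1)] by blast
  note Y = prob_space_axioms lin_comb_measurable[OF assms(1)] law
  have "\<sigma>\<^sup>2 > 0"
    using centered_gaussian_second_moment(2)[OF Y \<open>\<sigma> \<ge> 0\<close>] assms(2) by simp
  then have "\<sigma> > 0" using \<open>\<sigma> \<ge> 0\<close> by (cases "\<sigma> = 0") auto
  then show ?thesis by (rule centered_gaussian_tail_pos[OF Y \<open>\<sigma> \<ge> 0\<close>])
qed

end

locale continuous_gaussian_field = gaussian_field M W
  for M :: "'w measure" and W :: "'t::metric_space \<Rightarrow> 'w \<Rightarrow> real" +
  assumes AE_continuous: "AE \<omega> in M. continuous_on UNIV (\<lambda>x. W x \<omega>)"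

context continuous_gaussian_field
begin

lemma tendsto_increment_variance: "((\<lambda>x. \<integral>\<omega>. (W x \<omega> - W x0 \<omega>)\<^sup>2 \<partial>M) \<longlongrightarrow> 0) (at x0)"
  unfolding tendsto_at_iff_sequentially comp_def
proof (intro allI impI)
  fix X :: "nat \<Rightarrow> 't" assume X: "X \<longlonglongrightarrow> x0"
  let ?v = "\<lambda>x. \<integral>\<omega>. (W x \<omega> - W x0 \<omega>)\<^sup>2 \<partial>M"
  have "(\<lambda>i. \<integral>\<omega>. iexp (W (X i) \<omega> - W x0 \<omega>) \<partial>M) \<longlonglongrightarrow> (\<integral>\<omega>. iexp 0 \<partial>M)"
  proof (rule integral_dominated_convergence[where w="\<lambda>_. 1"])
    show "(\<lambda>\<omega>. iexp 0) \<in> borel_measurable M" by simp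
    show "(\<lambda>\<omega>. iexp (W (X i) \<omega> - W x0 \<omega>)) \<in> borel_measurable M" for i
      by measurable
    show "integrable M (\<lambda>_. 1::real)" by simp
    show "AE \<omega> in M. norm (iexp (W (X i) \<omega> - W x0 \<omega>)) \<le> 1" for i
      by (intro AE_I2) (simp add: norm_exp_i_times)
    show "AE \<omega> in M. (\<lambda>i. iexp (W (X i) \<omega> - W x0 \<omega>)) \<longlonglongrightarrow> iexp 0"
      using AE_continuous
    proof eventually_elim
      case (elim \<omega>)
      then have "isCont (\<lambda>x. W x \<omega>) x0" by (simp add: continuous_on_eq_continuous_at)
      then have "(\<lambda>i. W (X i) \<omega>) \<longlonglongrightarrow> W x0 \<omega>" using X by (rule isCont_tendsto_compose)
      then have "(\<lambda>i. W (X i) \<omega> - W x0 \<omega>) \<longlonglongrightarrow> 0"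
        using tendsto_diff[of _ "W x0 \<omega>" _ "\<lambda>_. W x0 \<omega>" "W x0 \<omega>"] by simp
      then show ?case
        by (intro isCont_tendsto_compose[where g=iexp]) (auto simp: isCont_iexp)
    qed
  qed
  moreover have "(\<integral>\<omega>. iexp (W (X i) \<omega> - W x0 \<omega>) \<partial>M) = exp (- ?v (X i) / 2)" for i
    using char_lin_comb[OF lin_comb_diff[OF lin_comb_W lin_comb_W], of 1] by simp
  ultimately have "(\<lambda>i. complex_of_real (exp (- ?v (X i) / 2))) \<longlonglongrightarrow> complex_of_real 1"
    by (simp add: prob_space)
  then have "(\<lambda>i. exp (- ?v (X i) / 2)) \<longlonglongrightarrow> 1"
    by (simp only: tendsto_of_real_iff)
  then have "(\<lambda>i. -2 * ln (exp (- ?v (X i) / 2))) \<longlonglongrightarrow> -2 * ln 1"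
    by (intro tendsto_intros) auto
  then show "(\<lambda>i. ?v (X i)) \<longlonglongrightarrow> 0" by simp
qed

lemma isCont_covariance:
  assumes g: "g \<in> lin_comb W"
  shows "isCont (\<lambda>x. \<integral>\<omega>. W x \<omega> * g \<omega> \<partial>M) x0"
proof -
  let ?D = "\<lambda>x \<omega>. W x \<omega> - W x0 \<omega>"
  have D: "?D x \<in> lin_comb W" for x by (intro lin_comb_diff lin_comb_W)
  have split: "(\<integral>\<omega>. W x \<omega> * g \<omega> \<partial>M)
      = (\<integral>\<omega>. W x0 \<omega> * g \<omega> \<partial>M) + (\<integral>\<omega>. ?D x \<omega> * g \<omega> \<partial>M)" for x
    using integrable_lin_comb_mult[OF lin_comb_W g] integrable_lin_comb_mult[OF D g]
    by (simp add: algebra_simps flip: Bochner_Integration.integral_add)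
  have "((\<lambda>x. (\<integral>\<omega>. W x0 \<omega> * g \<omega> \<partial>M) + (\<integral>\<omega>. ?D x \<omega> * g \<omega> \<partial>M))
      \<longlongrightarrow> (\<integral>\<omega>. W x0 \<omega> * g \<omega> \<partial>M) + 0) (at x0)"
    by (intro tendsto_add tendsto_const tendsto_covariance_zero[OF g D] tendsto_increment_variance)
  then show ?thesis
    unfolding isCont_def by (subst (1 2) split) simp
qed

lemma isCont_variance: "isCont (\<lambda>x. \<integral>\<omega>. (W x \<omega>)\<^sup>2 \<partial>M) x0"
proof -
  let ?D = "\<lambda>x \<omega>. W x \<omega> - W x0 \<omega>"
  have D: "?D x \<in> lin_comb W" for x by (intro lin_comb_diff lin_comb_W)
  have split: "(\<integral>\<omega>. (W x \<omega>)\<^sup>2 \<partial>M)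
      = (\<integral>\<omega>. (W x0 \<omega>)\<^sup>2 \<partial>M) + (\<integral>\<omega>. (?D x \<omega>)\<^sup>2 \<partial>M) + 2 * (\<integral>\<omega>. ?D x \<omega> * W x0 \<omega> \<partial>M)"
    for x
  proof -
    have "(\<integral>\<omega>. (W x \<omega>)\<^sup>2 \<partial>M)
        = (\<integral>\<omega>. (W x0 \<omega>)\<^sup>2 + (?D x \<omega>)\<^sup>2 + 2 * (?D x \<omega> * W x0 \<omega>) \<partial>M)"
      by (rule Bochner_Integration.integral_cong) (simp_all add: power2_eq_square algebra_simps)
    then show ?thesis
      using integrable_lin_comb_square[OF lin_comb_W] integrable_lin_comb_square[OF D]
        integrable_lin_comb_mult[OF D lin_comb_W] by simp
  qed
  have "((\<lambda>x. (\<integral>\<omega>. (W x0 \<omega>)\<^sup>2 \<partial>M) + (\<integral>\<omega>. (?D x \<omega>)\<^sup>2 \<partial>M)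
        + 2 * (\<integral>\<omega>. ?D x \<omega> * W x0 \<omega> \<partial>M)) \<longlongrightarrow> (\<integral>\<omega>. (W x0 \<omega>)\<^sup>2 \<partial>M) + 0 + 2 * 0) (at x0)"
    by (intro tendsto_add tendsto_mult tendsto_const tendsto_increment_variance
        tendsto_covariance_zero[OF lin_comb_W D])
  then show ?thesis
    unfolding isCont_def by (subst (1 2) split) simp
qed

lemma covariance_uniform_modulus:
  assumes "compact S" "\<delta> > 0"
  shows "\<exists>r>0. \<forall>y. dist y y0 < r \<longrightarrow>
    (\<forall>x\<in>S. \<bar>(\<integral>\<omega>. W x \<omega> * W y \<omega> \<partial>M) - (\<integral>\<omega>. W x \<omega> * W y0 \<omega> \<partial>M)\<bar> \<le> \<delta>)"
proof -
  have "compact ((\<lambda>x. \<integral>\<omega>. (W x \<omega>)\<^sup>2 \<partial>M) ` S)"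
    using assms(1) isCont_variance by (intro compact_continuous_image continuous_at_imp_continuous_on) auto
  then obtain C where C: "C > 0" "\<And>x. x \<in> S \<Longrightarrow> (\<integral>\<omega>. (W x \<omega>)\<^sup>2 \<partial>M) \<le> C"
    by (auto dest!: compact_imp_bounded simp: bounded_pos)
  define \<mu> where "\<mu> = \<delta> / C"
  have "\<mu> > 0" using assms C by (simp add: \<mu>_def)
  have "\<forall>\<^sub>F y in at y0. dist (\<integral>\<omega>. (W y \<omega> - W y0 \<omega>)\<^sup>2 \<partial>M) 0 < \<delta> * \<mu>"
    using tendsto_increment_variance \<open>\<mu> > 0\<close> assms by (intro tendstoD) auto
  then obtain r where "r > 0"
    and r: "\<And>y. y \<noteq> y0 \<Longrightarrow> dist y y0 < r \<Longrightarrow> (\<integral>\<omega>. (W y \<omega> - W y0 \<omega>)\<^sup>2 \<partial>M) < \<delta> * \<mu>"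
    by (auto simp: eventually_at dist_real_def)
  have small: "(\<integral>\<omega>. (W y \<omega> - W y0 \<omega>)\<^sup>2 \<partial>M) \<le> \<delta> * \<mu>" if "dist y y0 < r" for y
    using r[OF _ that] assms \<open>\<mu> > 0\<close> by (cases "y = y0") (auto intro: less_imp_le)
  show ?thesis
  proof (intro exI[of _ r] conjI allI impI ballI)
    show "r > 0" by fact
    fix y x assume y: "dist y y0 < r" and "x \<in> S"
    have D: "(\<lambda>\<omega>. W y \<omega> - W y0 \<omega>) \<in> lin_comb W" by (intro lin_comb_diff lin_comb_W)
    have "(\<integral>\<omega>. W x \<omega> * W y \<omega> \<partial>M) - (\<integral>\<omega>. W x \<omega> * W y0 \<omega> \<partial>M)
        = (\<integral>\<omega>. W x \<omega> * (W y \<omega> - W y0 \<omega>) \<partial>M)"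
      using integrable_lin_comb_mult[OF lin_comb_W lin_comb_W, of x] by (simp add: right_diff_distrib)
    also have "\<bar>\<dots>\<bar> \<le> (\<mu> * (\<integral>\<omega>. (W x \<omega>)\<^sup>2 \<partial>M) + (\<integral>\<omega>. (W y \<omega> - W y0 \<omega>)\<^sup>2 \<partial>M) / \<mu>) / 2"
      by (rule abs_covariance_le[OF lin_comb_W D \<open>\<mu> > 0\<close>])
    also have "\<dots> \<le> (\<mu> * C + (\<delta> * \<mu>) / \<mu>) / 2"
      using C(2)[OF \<open>x \<in> S\<close>] small[OF y] \<open>\<mu> > 0\<close>
      by (intro divide_right_mono add_mono mult_left_mono) auto
    also have "\<dots> = \<delta>" using C \<open>\<mu> > 0\<close> by (simp add: \<mu>_def)
    finally show "\<bar>(\<integral>\<omega>. W x \<omega> * W y \<omega> \<partial>M) - (\<integral>\<omega>. W x \<omega> * W y0 \<omega> \<partial>M)\<bar> \<le> \<delta>" .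
  qed
qed

lemma exists_lin_comb_covariance_lower_bound:
  assumes "finite_measure \<mu>" "sets \<mu> = sets (restrict_space borel S)" "compact S" "\<epsilon> > 0"
    and cov: "\<forall>x\<in>S. \<epsilon> \<le> (\<integral>y. (\<integral>\<omega>. W x \<omega> * W y \<omega> \<partial>M) \<partial>\<mu>)"
  obtains Y where "Y \<in> lin_comb W" "\<And>x. x \<in> S \<Longrightarrow> \<epsilon> / 2 \<le> (\<integral>\<omega>. W x \<omega> * Y \<omega> \<partial>M)"
proof -
  let ?K = "\<lambda>x y. \<integral>\<omega>. W x \<omega> * W y \<omega> \<partial>M"
  have "\<forall>\<delta>>0. \<forall>y0\<in>S. \<exists>r>0. \<forall>y\<in>S. dist y y0 < r \<longrightarrow> (\<forall>x\<in>S. \<bar>?K x y - ?K x y0\<bar> \<le> \<delta>)"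
    using covariance_uniform_modulus[OF \<open>compact S\<close>] by blast
  then obtain k :: nat and c w where "\<forall>x\<in>S. \<epsilon> / 2 \<le> (\<Sum>j<k. w j * ?K x (c j))"
    using integral_lower_bound_imp_finite_sum_lower_bound[OF assms(1-3) cov \<open>\<epsilon> > 0\<close>] by blast
  moreover have "(\<integral>\<omega>. W x \<omega> * (\<Sum>j<k. w j * W (c j) \<omega>) \<partial>M) = (\<Sum>j<k. w j * ?K x (c j))" for x
    using integrable_lin_comb_mult[OF lin_comb_W lin_comb_W]
    by (simp add: sum_distrib_left algebra_simps)
  moreover have "(\<lambda>\<omega>. \<Sum>j<k. w j * W (c j) \<omega>) \<in> lin_comb W"
    by (intro lin_comb_sum lin_comb_scale lin_comb_W)
  ultimately show ?thesis using that by auto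
qed

lemma pos_prob_large_projection_bounded_residual:
  assumes "compact S" "S \<noteq> {}" and Y: "Y \<in> lin_comb W" and var: "(\<integral>\<omega>. (Y \<omega>)\<^sup>2 \<partial>M) > 0"
    and a: "continuous_on S a" and orth: "\<And>x. (\<integral>\<omega>. Y \<omega> * (W x \<omega> - a x * Y \<omega>) \<partial>M) = 0"
  shows "\<exists>b. \<forall>t. \<exists>A\<in>sets M. prob A > 0 \<and>
    A \<subseteq> {\<omega>\<in>space M. t \<le> Y \<omega> \<and> (\<forall>x\<in>S. \<bar>W x \<omega> - a x * Y \<omega>\<bar> \<le> b)}"
proof -
  define R where "R x \<omega> = W x \<omega> - a x * Y \<omega>" for x \<omega>
  have R: "R x \<in> lin_comb W" for x
    unfolding R_def using Y by (intro lin_comb_diff lin_comb_scale lin_comb_W)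
  have [measurable]: "Y \<in> borel_measurable M" using Y by (rule lin_comb_measurable)
  have R_measurable [measurable]: "R x \<in> borel_measurable M" for x using R by (rule lin_comb_measurable)
  have R_cont: "continuous_on S (\<lambda>x. R x \<omega>)" if "continuous_on UNIV (\<lambda>x. W x \<omega>)" for \<omega>
    unfolding R_def using that a by (intro continuous_intros) (auto intro: continuous_on_subset)
  obtain d :: "nat \<Rightarrow> 't" where d: "range d \<subseteq> S" "closure (range d) = S"
    using compact_dense_sequence[OF \<open>compact S\<close> \<open>S \<noteq> {}\<close>] by blast
  have "AE \<omega> in M. \<exists>B. \<forall>j. \<bar>R (d j) \<omega>\<bar> \<le> B"
    using AE_continuous
  proof eventually_elim
    case (elim \<omega>)
    have "compact ((\<lambda>x. R x \<omega>) ` S)" by (intro compact_continuous_image R_cont elim \<open>compact S\<close>)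
    then obtain B where "\<forall>x\<in>S. \<bar>R x \<omega>\<bar> \<le> B" by (auto dest!: compact_imp_bounded simp: bounded_iff)
    then show ?case using d(1) by blast
  qed
  then obtain b where b: "prob {\<omega>\<in>space M. \<forall>j. \<bar>R (d j) \<omega>\<bar> \<le> b} > 0"
    using AE_bounded_imp_pos_prob_bounded[of "\<lambda>j. R (d j)", OF R_measurable] by blast
  have "\<exists>A\<in>sets M. prob A > 0 \<and> A \<subseteq> {\<omega>\<in>space M. t \<le> Y \<omega> \<and> (\<forall>x\<in>S. \<bar>R x \<omega>\<bar> \<le> b)}" for t
  proof -
    define E where "E = {\<omega>\<in>space M. Y \<omega> \<in> {t..} \<and> (\<forall>j. R (d j) \<omega> \<in> {x. \<bar>x\<bar> \<le> b})}"
    have "prob E = prob {\<omega>\<in>space M. Y \<omega> \<in> {t..}} * prob {\<omega>\<in>space M. \<forall>j. R (d j) \<omega> \<in> {x. \<bar>x\<bar> \<le> b}}"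
      unfolding E_def using orth
      by (intro orthogonal_lin_comb_indep_countable Y R) (simp_all add: R_def)
    also have "\<dots> > 0"
      using lin_comb_tail_pos[OF Y var, of t] b by (simp add: conj_commute)
    finally have "prob E > 0" .
    moreover have "E \<in> sets M" unfolding E_def by measurable
    ultimately obtain A where A: "A \<in> sets M" "prob A > 0"
      and A_sub: "A \<subseteq> {\<omega>\<in>E. continuous_on UNIV (\<lambda>x. W x \<omega>)}"
      using AE_imp_pos_prob_subset[OF _ _ AE_continuous] by blast
    have "\<bar>R x \<omega>\<bar> \<le> b" if "\<omega> \<in> A" "x \<in> S" for x \<omega>
      using continuous_on_closure_norm_le[of "range d" "\<lambda>x. R x \<omega>" b x] R_cont[of \<omega>] A_sub that d
      by (auto simp: E_def)
    then have "A \<subseteq> {\<omega>\<in>space M. t \<le> Y \<omega> \<and> (\<forall>x\<in>S. \<bar>R x \<omega>\<bar> \<le> b)}"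
      using A_sub by (auto simp: E_def)
    with A show ?thesis by blast
  qed
  then show ?thesis unfolding R_def by blast
qed

theorem pos_prob_inf_ge_on_compact:
  assumes "compact S" "S \<noteq> {}" "finite_measure \<mu>" "sets \<mu> = sets (restrict_space borel S)" "\<epsilon> > 0"
    and cov: "\<forall>x\<in>S. \<epsilon> \<le> (\<integral>y. (\<integral>\<omega>. W x \<omega> * W y \<omega> \<partial>M) \<partial>\<mu>)"
  shows "\<exists>A\<in>sets M. A \<subseteq> {\<omega>\<in>space M. \<forall>x\<in>S. a \<le> W x \<omega>} \<and> prob A > 0"
proof -
  obtain Y where Y: "Y \<in> lin_comb W" and cov_Y: "\<And>x. x \<in> S \<Longrightarrow> \<epsilon> / 2 \<le> (\<integral>\<omega>. W x \<omega> * Y \<omega> \<partial>M)"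
    using exists_lin_comb_covariance_lower_bound[OF assms(3,4,1,5) cov] by blast
  define v where "v = (\<integral>\<omega>. (Y \<omega>)\<^sup>2 \<partial>M)"
  define coef where "coef x = (\<integral>\<omega>. W x \<omega> * Y \<omega> \<partial>M) / v" for x
  obtain x0 where "x0 \<in> S" using \<open>S \<noteq> {}\<close> by blast
  then have "v > 0"
    unfolding v_def using cov_Y[of x0] \<open>\<epsilon> > 0\<close>
    by (intro variance_pos_if_covariance_ne_zero[OF lin_comb_W[of W x0] Y]) auto
  have "(\<integral>\<omega>. Y \<omega> * (W x \<omega> - coef x * Y \<omega>) \<partial>M) = 0" for x
    using \<open>v > 0\<close> unfolding coef_def v_def by (intro orthogonal_residual Y lin_comb_W) simp
  moreover have "continuous_on S coef"
    unfolding coef_def using isCont_covariance[OF Y] \<open>v > 0\<close>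
    by (intro continuous_intros continuous_at_imp_continuous_on) auto
  ultimately obtain b where b: "\<And>t. \<exists>A\<in>sets M. prob A > 0 \<and>
      A \<subseteq> {\<omega>\<in>space M. t \<le> Y \<omega> \<and> (\<forall>x\<in>S. \<bar>W x \<omega> - coef x * Y \<omega>\<bar> \<le> b)}"
    using pos_prob_large_projection_bounded_residual[OF assms(1,2) Y] \<open>v > 0\<close> unfolding v_def by blast
  define t where "t = (b + \<bar>a\<bar>) / (\<epsilon> / (2 * v))"
  obtain A where A: "A \<in> sets M" "prob A > 0"
    and A_sub: "A \<subseteq> {\<omega>\<in>space M. t \<le> Y \<omega> \<and> (\<forall>x\<in>S. \<bar>W x \<omega> - coef x * Y \<omega>\<bar> \<le> b)}"
    using b[of t] by blast
  have "a \<le> W x \<omega>" if "\<omega> \<in> A" "x \<in> S" for x \<omega>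
  proof -
    have "b \<ge> 0" using A_sub that by (force intro: order_trans[OF abs_ge_zero])
    have "\<epsilon> / (2 * v) \<le> coef x" using cov_Y[OF that(2)] \<open>v > 0\<close>
      by (simp add: coef_def divide_right_mono field_simps)
    moreover have "t \<le> Y \<omega>" "t \<ge> 0" using A_sub that \<open>b \<ge> 0\<close> \<open>v > 0\<close> \<open>\<epsilon> > 0\<close>
      by (auto simp: t_def)
    moreover have "0 < \<epsilon> / (2 * v)" using \<open>v > 0\<close> \<open>\<epsilon> > 0\<close> by simp
    ultimately have "(\<epsilon> / (2 * v)) * t \<le> coef x * Y \<omega>"
      by (intro mult_mono) auto
    moreover have "(\<epsilon> / (2 * v)) * t = b + \<bar>a\<bar>" using \<open>v > 0\<close> \<open>\<epsilon> > 0\<close> by (simp add: t_def)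
    moreover have "\<bar>W x \<omega> - coef x * Y \<omega>\<bar> \<le> b" using A_sub that by auto
    ultimately show ?thesis by linarith
  qed
  then show ?thesis using A A_sub by blast
qed

end

lemma sets_sphere_surface_measure:
  "sets (sphere_surface_measure :: (real^'n) measure) = sets (restrict_space borel (sphere 0 1))"
  by (simp add: sphere_surface_measure_def)

lemma finite_measure_sphere_surface_measure: "finite_measure (sphere_surface_measure :: (real^'n) measure)"
proof (rule finite_measureI)
  let ?R = "restrict_space lborel (cball (0::real^'n) 1 - {0})"
  let ?D = "distr ?R (restrict_space borel (sphere 0 1)) (\<lambda>x. x /\<^sub>R norm x)"
  have "(\<lambda>x. x /\<^sub>R norm x) \<in> ?R \<rightarrow>\<^sub>M restrict_space borel (sphere 0 1)"
    by (intro measurable_restrict_space2 measurable_restrict_space1) (auto simp: space_restrict_space)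
  moreover have "(\<lambda>x::real^'n. x /\<^sub>R norm x) -` sphere 0 1 \<inter> (cball 0 1 - {0}) = cball 0 1 - {0}"
    by auto
  ultimately have "emeasure ?D (sphere 0 1) = emeasure ?R (space ?R)"
    by (subst emeasure_distr) (auto simp: space_restrict_space sets_restrict_space)
  also have "\<dots> = emeasure lborel (cball (0::real^'n) 1 - {0})"
    by (simp add: emeasure_restrict_space space_restrict_space)
  also have "\<dots> < \<infinity>"
    by (intro emeasure_bounded_finite) (auto intro: bounded_subset[OF bounded_cball])
  finally have "emeasure ?D (sphere 0 1) \<noteq> \<infinity>" by simp
  moreover have "emeasure (sphere_surface_measure :: (real^'n) measure) (space sphere_surface_measure)
      = of_nat CARD('n) * emeasure ?D (sphere 0 1)"
    by (simp add: sphere_surface_measure_def space_scale_measure space_restrict_space)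
  ultimately show "emeasure (sphere_surface_measure :: (real^'n) measure) (space sphere_surface_measure) \<noteq> \<infinity>"
    by (simp add: ennreal_mult_eq_top_iff)
qed

theorem corollary3p2:
  fixes M :: "'w measure" and W :: "real^'n \<Rightarrow> 'w \<Rightarrow> real"
    and \<epsilon> a :: real
  assumes dim: "CARD('n) \<ge> 2"
    and gauss: "centered_gaussian_field M W"
    and cont: "AE \<omega> in M. continuous_on UNIV (\<lambda>x. W x \<omega>)"
    and zero: "AE \<omega> in M. W 0 \<omega> = 0"
    and eps: "\<epsilon> > 0"
    and cov: "\<forall>x\<in>sphere 0 1.
       (\<integral>y. (\<integral>\<omega>. W x \<omega> * W y \<omega> \<partial>M) \<partial>sphere_surface_measure) \<ge> \<epsilon>"
  shows "\<exists>A\<in>sets M. A \<subseteq> {\<omega>\<in>space M. \<forall>x\<in>sphere 0 1. a \<le> W x \<omega>}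
              \<and> measure M A > 0"
proof -
  interpret continuous_gaussian_field M W
    using gauss cont by unfold_locales
  show ?thesis
    using cov by (intro pos_prob_inf_ge_on_compact[OF compact_sphere _
          finite_measure_sphere_surface_measure sets_sphere_surface_measure eps]) auto
qed

end
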